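(* Let $\gamma_1,\dots,\gamma_n\in\mathcal{M}_k\otimes\mathcal{M}_k$ be states with $\mathcal{R}(\gamma_i)=\gamma_i$ for $i=1,\dots,n$. Then there is no vector $v=a\otimes b+c\otimes d\in\mathbb{C}^{k^n}\otimes\mathbb{C}^{k^n}$ with $a,b,c,d\in\mathbb{C}^{k^n}$, $\dim\mathrm{span}\{a,b,c,d\}=2$, such that $\mathrm{tr}\big(S(\gamma_1^\Gamma,\dots,\gamma_n^\Gamma)vv^*\big)<0$. In particular this holds with $\gamma_1=\cdots=\gamma_n$.
   Context: $\mathcal{M}_k$ denotes complex $k\times k$ matrices; $\mathcal{M}_k\otimes\mathcal{M}_m\cong\mathcal{M}_{km}$ via the Kronecker product. A state is a positive semidefinite Hermitian matrix (not necessarily of trace one). Partial transpose: $(\sum_iA_i\otimes B_i)^\Gamma=\sum_iA_i\otimes B_i^t$. Realignment on $\mathcal{M}_k\otimes\mathcal{M}_k$: identify $\mathcal{M}_k$ with $\mathbb{C}^k\otimes\mathbb{C}^k$ via $\mathrm{vec}(vw^t)=v\otimes w$ (extended linearly), and set $\mathcal{R}(A\otimes B)=\mathrm{vec}(A)\mathrm{vec}(B)^t$, extended linearly. Shuffle: if $\gamma_i=\sum_{j=1}^{n_i}A^i_j\otimes B^i_j\in\mathcal{M}_{k}\otimes\mathcal{M}_{k}$, then $S(\gamma_1,\dots,\gamma_n)=\sum_{j_1,\dots,j_n}A^1_{j_1}\otimes\cdots\otimes A^n_{j_n}\otimes B^1_{j_1}\otimes\cdots\otimes B^n_{j_n}\in\mathcal{M}_{k^n}\otimes\mathcal{M}_{k^n}$.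 *)

theory Defs
  imports "Jordan_Normal_Form.Schur_Decomposition" "Jordan_Normal_Form.DL_Rank"
begin

(* Conventions: M_k (x) M_k = M_{k*k}, the basis vector e_i (x) e_j (i,j<k) has
   flat index i*k+j (Kronecker ordering).  Likewise C^{k^n} (x) C^{k^n} = C^{k^n*k^n}. *)

definition trace :: "complex mat \<Rightarrow> complex" where
  "trace A = (\<Sum>i<dim_row A. A $$ (i,i))"

(* state = positive semidefinite Hermitian matrix (trace not normalised) *)
definition is_state :: "nat \<Rightarrow> complex mat \<Rightarrow> bool" where
  "is_state m A \<longleftrightarrow> A \<in> carrier_mat m m \<and> mat_adjoint A = A \<and>
     (\<forall>x \<in> carrier_vec m. 0 \<le> (A *\<^sub>v x) \<bullet>c x)"

(* partial transpose on M_k (x) M_k:  (A (x) B)^Gamma = A (x) B^t *)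
definition ptrans :: "nat \<Rightarrow> complex mat \<Rightarrow> complex mat" where
  "ptrans k G = mat (k*k) (k*k)
     (\<lambda>(r,c). G $$ ((r div k) * k + c mod k, (c div k) * k + r mod k))"

(* realignment: R(A (x) B) = vec(A) vec(B)^t with vec(A) indexed by (i,i') = A_{i i'} *)
definition realign :: "nat \<Rightarrow> complex mat \<Rightarrow> complex mat" where
  "realign k G = mat (k*k) (k*k)
     (\<lambda>(r,c). G $$ ((r div k) * k + c div k, (r mod k) * k + c mod k))"

(* m-th digit (m < n, most significant first) of a multi-index I < k^n *)
definition digit :: "nat \<Rightarrow> nat \<Rightarrow> nat \<Rightarrow> nat \<Rightarrow> nat" where
  "digit k n m I = (I div k ^ (n - 1 - m)) mod k"

(* shuffle S(g_0,...,g_{n-1}) in M_{k^n} (x) M_{k^n}, written in coordinates: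
   the entry at row (I,J), column (I',J') is prod_m g_m((I_m,J_m),(I'_m,J'_m)) *)
definition shuffle :: "nat \<Rightarrow> nat \<Rightarrow> (nat \<Rightarrow> complex mat) \<Rightarrow> complex mat" where
  "shuffle k n g = (let N = k ^ n in mat (N*N) (N*N)
     (\<lambda>(r,c). \<Prod>m<n. g m $$ (digit k n m (r div N) * k + digit k n m (r mod N),
                                digit k n m (c div N) * k + digit k n m (c mod N))))"

definition kron_vec :: "nat \<Rightarrow> complex vec \<Rightarrow> complex vec \<Rightarrow> complex vec" where
  "kron_vec N a b = vec (N*N) (\<lambda>x. a $ (x div N) * b $ (x mod N))"

definition outer :: "complex vec \<Rightarrow> complex mat" where
  "outer v = mat (dim_vec v) (dim_vec v) (\<lambda>(i,j). v $ i * cnj (v $ j))"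

end

theory Submission
  imports Defs
begin

text \<open>
  Let \<open>G\<close> be the shuffle of the states themselves, viewed as a kernel on pairs of
  multi-indices; the quantity in question is the partial-transpose form
  \<open>Q(v) = \<Sum> cnj v(I,J) G((I,J'),(I',J)) v(I',J')\<close>.  As a tensor product of states, \<open>G\<close> is
  positive semidefinite, and realignment invariance of every factor gives
  \<open>G((I,J),(I',J')) = G((I,I'),(J,J'))\<close>.  This symmetry makes \<open>Q\<close> unchanged when \<open>v\<close> is
  transposed, so \<open>v\<close> may be replaced by its symmetric part.  Since \<open>a, b, c, d\<close> span a plane,
  that symmetric part is \<open>y\<^sub>1 \<otimes> y\<^sub>1 + y\<^sub>2 \<otimes> y\<^sub>2\<close> (a complex symmetric 2\<times>2 matrix factors as
  \<open>X\<^sup>T X\<close>).  Expanding, \<open>Q\<close> becomes \<open>A + B + 2 Re C\<close> with \<open>A, B, C\<close> values of the positive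
  form of \<open>G\<close>, and two applications of Cauchy-Schwarz give \<open>|C| \<le> D \<le> \<surd>(AB) \<le> (A + B)/2\<close>.
\<close>

section \<open>Sesquilinear forms of kernels\<close>

definition sesq :: "'a set \<Rightarrow> ('a \<Rightarrow> 'a \<Rightarrow> complex) \<Rightarrow> ('a \<Rightarrow> complex) \<Rightarrow> ('a \<Rightarrow> complex) \<Rightarrow> complex"
  where "sesq A K f g = (\<Sum>x\<in>A. \<Sum>y\<in>A. cnj (f x) * K x y * g y)"

definition hermitian_kernel :: "'a set \<Rightarrow> ('a \<Rightarrow> 'a \<Rightarrow> complex) \<Rightarrow> bool"
  where "hermitian_kernel A K \<longleftrightarrow> (\<forall>x\<in>A. \<forall>y\<in>A. K y x = cnj (K x y))"

definition psd_kernel :: "'a set \<Rightarrow> ('a \<Rightarrow> 'a \<Rightarrow> complex) \<Rightarrow> bool"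
  where "psd_kernel A K \<longleftrightarrow> (\<forall>f. 0 \<le> sesq A K f f)"

lemma sesq_cong:
  assumes "\<And>x y. x \<in> A \<Longrightarrow> y \<in> A \<Longrightarrow> K x y = K' x y"
    and "\<And>x. x \<in> A \<Longrightarrow> f x = f' x" and "\<And>x. x \<in> A \<Longrightarrow> g x = g' x"
  shows "sesq A K f g = sesq A K' f' g'"
  unfolding sesq_def using assms by (intro sum.cong refl) auto

lemma sesq_lincomb_left:
  "sesq A K (\<lambda>x. \<alpha> * f x + \<beta> * f' x) g = cnj \<alpha> * sesq A K f g + cnj \<beta> * sesq A K f' g"
  unfolding sesq_def by (simp add: sum_distrib_left sum.distrib algebra_simps)

lemma sesq_lincomb_right:
  "sesq A K f (\<lambda>x. \<alpha> * g x + \<beta> * g' x) = \<alpha> * sesq A K f g + \<beta> * sesq A K f g'"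
  unfolding sesq_def by (simp add: sum_distrib_left sum.distrib algebra_simps)

lemma sesq_add_left: "sesq A K (\<lambda>x. f x + f' x) g = sesq A K f g + sesq A K f' g"
  using sesq_lincomb_left[of A K 1 f 1 f' g] by simp

lemma sesq_add_right: "sesq A K f (\<lambda>x. g x + g' x) = sesq A K f g + sesq A K f g'"
  using sesq_lincomb_right[of A K f 1 g 1 g'] by simp

lemma sesq_sum_kernel:
  "sesq A (\<lambda>x y. \<Sum>r\<in>R. K r x y) f g = (\<Sum>r\<in>R. sesq A (K r) f g)"
  unfolding sesq_def by (simp only: sum_distrib_left sum_distrib_right sum.swap[where B = R])

lemma sesq_rank_one: "sesq A (\<lambda>x y. \<phi> x * cnj (\<phi> y)) f f = cnj z * z"
  if "z = (\<Sum>x\<in>A. cnj (\<phi> x) * f x)"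
  unfolding that sesq_def by (simp add: cnj_sum sum_product mult_ac)

lemma sesq_conj_swap:
  assumes "hermitian_kernel A K"
  shows "sesq A K g f = cnj (sesq A K f g)"
proof -
  have "cnj (sesq A K f g) = (\<Sum>x\<in>A. \<Sum>y\<in>A. cnj (g y) * K y x * f x)"
    unfolding sesq_def cnj_sum
  proof (intro sum.cong refl)
    fix x y assume "x \<in> A" "y \<in> A"
    then have "K y x = cnj (K x y)" using assms unfolding hermitian_kernel_def by blast
    then show "cnj (cnj (f x) * K x y * g y) = cnj (g y) * K y x * f x" by simp
  qed
  also have "\<dots> = sesq A K g f" unfolding sesq_def by (rule sum.swap)
  finally show ?thesis by simp
qed

lemma sesq_delta_left:
  assumes "finite A" "z \<in> A"
  shows "sesq A K (\<lambda>w. if w = z then 1 else 0) g = (\<Sum>y\<in>A. K z y * g y)"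
proof -
  have "sesq A K (\<lambda>w. if w = z then 1 else 0) g = (\<Sum>x\<in>A. if x = z then \<Sum>y\<in>A. K z y * g y else 0)"
    unfolding sesq_def by (intro sum.cong refl) auto
  then show ?thesis using assms by simp
qed

lemma sesq_delta_right:
  assumes "finite A" "z \<in> A"
  shows "sesq A K f (\<lambda>w. if w = z then 1 else 0) = (\<Sum>x\<in>A. cnj (f x) * K x z)"
proof -
  have "sesq A K f (\<lambda>w. if w = z then 1 else 0) = (\<Sum>x\<in>A. \<Sum>y\<in>A. if y = z then cnj (f x) * K x z else 0)"
    unfolding sesq_def by (intro sum.cong refl) auto
  then show ?thesis using assms by simp
qed

lemma sesq_delta:
  assumes "finite A" "x \<in> A" "z \<in> A"
  shows "sesq A K (\<lambda>w. if w = x then 1 else 0) (\<lambda>w. if w = z then 1 else 0) = K x z"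
proof -
  have "(\<Sum>y\<in>A. K x y * (if y = z then 1 else 0)) = (\<Sum>y\<in>A. if y = z then K x z else 0)"
    by (intro sum.cong refl) auto
  then show ?thesis using assms by (simp add: sesq_delta_left)
qed

lemma psd_kernel_nonneg_re:
  "psd_kernel A K \<Longrightarrow> 0 \<le> Re (sesq A K f f)"
  unfolding psd_kernel_def less_eq_complex_def by simp

lemma cmod_square_le_of_nonneg_form:
  fixes a b :: real and c :: complex
  assumes form: "\<And>\<alpha> \<beta>. 0 \<le> (cmod \<alpha>)\<^sup>2 * a + 2 * Re (cnj \<alpha> * \<beta> * c) + (cmod \<beta>)\<^sup>2 * b"
    and "0 \<le> a" "0 \<le> b"
  shows "(cmod c)\<^sup>2 \<le> a * b"
proof (cases "b = 0")
  case False
  have re: "Re (cnj (of_real b) * (- cnj c) * c) = - (b * (cmod c)\<^sup>2)"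
    by (simp add: cmod_power2[unfolded power2_eq_square] power2_eq_square algebra_simps)
  with form[of "of_real b" "- cnj c"] have "0 \<le> b\<^sup>2 * a - 2 * (b * (cmod c)\<^sup>2) + (cmod c)\<^sup>2 * b"
    using \<open>0 \<le> b\<close> by (simp only: norm_of_real abs_of_nonneg norm_minus_cancel complex_mod_cnj)
  then have "0 \<le> b * (a * b - (cmod c)\<^sup>2)" by (simp add: power2_eq_square algebra_simps)
  with False \<open>0 \<le> b\<close> show ?thesis by (simp add: zero_le_mult_iff)
next
  case True
  show ?thesis
  proof (rule ccontr)
    assume "\<not> ?thesis"
    then have pos: "0 < (cmod c)\<^sup>2" using True by simp
    \<comment> \<open>with \<open>b = 0\<close>, the choice \<open>\<beta> = - t cnj c\<close> for large \<open>t\<close> makes the form negative\<close>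
    define t where "t = (a + 1) / (cmod c)\<^sup>2"
    have "Re (cnj 1 * (- of_real t * cnj c) * c) = - (t * (cmod c)\<^sup>2)"
      by (simp add: cmod_power2[unfolded power2_eq_square] power2_eq_square algebra_simps)
    with form[of 1 "- of_real t * cnj c"] True have "0 \<le> a - 2 * (t * (cmod c)\<^sup>2)"
      by simp
    also have "t * (cmod c)\<^sup>2 = a + 1" using pos unfolding t_def by simp
    finally show False using \<open>0 \<le> a\<close> by simp
  qed
qed

lemma sesq_cauchy_schwarz:
  assumes "hermitian_kernel A K" "psd_kernel A K"
  shows "(cmod (sesq A K f g))\<^sup>2 \<le> Re (sesq A K f f) * Re (sesq A K g g)"
proof (rule cmod_square_le_of_nonneg_form)
  fix \<alpha> \<beta> :: complex
  let ?Q = "sesq A K" and ?h = "\<lambda>x. \<alpha> * f x + \<beta> * g x"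
  define w where "w = cnj \<alpha> * \<beta> * ?Q f g"
  have "?Q ?h ?h = cnj \<alpha> * \<alpha> * ?Q f f + w + cnj w + cnj \<beta> * \<beta> * ?Q g g"
    using sesq_conj_swap[OF assms(1), of g f] unfolding w_def
    by (simp add: sesq_lincomb_left sesq_lincomb_right algebra_simps)
  moreover have "cnj \<alpha> * \<alpha> = of_real ((cmod \<alpha>)\<^sup>2)" "cnj \<beta> * \<beta> = of_real ((cmod \<beta>)\<^sup>2)"
    using complex_norm_square[of \<alpha>] complex_norm_square[of \<beta>] by (simp_all add: mult.commute)
  ultimately have "Re (?Q ?h ?h) = Re (of_real ((cmod \<alpha>)\<^sup>2) * ?Q f f + w + cnj w + of_real ((cmod \<beta>)\<^sup>2) * ?Q g g)"
    by (simp only:)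
  also have "\<dots> = (cmod \<alpha>)\<^sup>2 * Re (?Q f f) + 2 * Re w + (cmod \<beta>)\<^sup>2 * Re (?Q g g)"
    by simp
  finally have "Re (?Q ?h ?h) = (cmod \<alpha>)\<^sup>2 * Re (?Q f f) + 2 * Re (cnj \<alpha> * \<beta> * ?Q f g) + (cmod \<beta>)\<^sup>2 * Re (?Q g g)"
    unfolding w_def .
  then show "0 \<le> (cmod \<alpha>)\<^sup>2 * Re (?Q f f) + 2 * Re (cnj \<alpha> * \<beta> * ?Q f g) + (cmod \<beta>)\<^sup>2 * Re (?Q g g)"
    using psd_kernel_nonneg_re[OF assms(2), of ?h] by simp
qed (use psd_kernel_nonneg_re[OF assms(2)] in auto)

lemma psd_kernel_diag_nonneg:
  assumes "finite A" "psd_kernel A K" "x \<in> A"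
  shows "0 \<le> K x x"
  using assms sesq_delta[of A x x K] unfolding psd_kernel_def by metis

lemma psd_kernel_zero_diag:
  assumes "finite A" "hermitian_kernel A K" "psd_kernel A K" "x \<in> A" "z \<in> A" "K z z = 0"
  shows "K x z = 0"
proof -
  let ?\<delta> = "\<lambda>x w. if w = x then 1 else 0"
  have "(cmod (K x z))\<^sup>2 \<le> Re (K x x) * Re (K z z)"
    using sesq_cauchy_schwarz[OF assms(2,3), of "?\<delta> x" "?\<delta> z"] assms sesq_delta[of A] by simp
  then show ?thesis using \<open>K z z = 0\<close> by simp
qed

lemma hermitian_kernel_subset:
  "A \<subseteq> B \<Longrightarrow> hermitian_kernel B K \<Longrightarrow> hermitian_kernel A K"
  unfolding hermitian_kernel_def by blast

lemma hermitian_kernel_minus_outer: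
  assumes "hermitian_kernel A K"
  shows "hermitian_kernel A (\<lambda>x y. K x y - c x * cnj (c y))"
  unfolding hermitian_kernel_def
proof (intro ballI)
  fix x y assume "x \<in> A" "y \<in> A"
  then have "K y x = cnj (K x y)" using assms unfolding hermitian_kernel_def by blast
  then show "K y x - c y * cnj (c x) = cnj (K x y - c x * cnj (c y))" by simp
qed

lemma psd_kernel_subset:
  assumes "finite B" "A \<subseteq> B" "psd_kernel B K"
  shows "psd_kernel A K"
  unfolding psd_kernel_def
proof
  fix f :: "'a \<Rightarrow> complex"
  let ?f = "\<lambda>x. if x \<in> A then f x else 0"
  have restrict: "(\<Sum>x\<in>B. if x \<in> A then F x else 0) = (\<Sum>x\<in>A. F x)" for F :: "'a \<Rightarrow> complex"
    using sum.inter_restrict[OF assms(1), of F A] assms(2) by (simp add: Int_absorb1)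
  have "sesq B K ?f ?f = (\<Sum>x\<in>B. if x \<in> A then \<Sum>y\<in>B. if y \<in> A then cnj (f x) * K x y * f y else 0 else 0)"
    unfolding sesq_def
  proof (rule sum.cong[OF refl])
    fix x
    show "(\<Sum>y\<in>B. cnj (?f x) * K x y * ?f y)
        = (if x \<in> A then \<Sum>y\<in>B. if y \<in> A then cnj (f x) * K x y * f y else 0 else 0)"
      by (cases "x \<in> A") (auto intro: sum.cong)
  qed
  also have "\<dots> = sesq A K f f" unfolding sesq_def restrict ..
  finally have "sesq B K ?f ?f = sesq A K f f" .
  then show "0 \<le> sesq A K f f" using assms(3) unfolding psd_kernel_def by metis
qed

section \<open>Gram decomposition of positive kernels\<close>

lemma psd_kernel_minus_column_outer:
  assumes A: "finite A" "z \<in> A" and herm: "hermitian_kernel A K" and psd: "psd_kernel A K"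
    and "0 < s" and col: "\<And>x. x \<in> A \<Longrightarrow> K x z = of_real s * c x" and cz: "c z = of_real s"
  shows "psd_kernel A (\<lambda>x y. K x y - c x * cnj (c y))"
  unfolding psd_kernel_def
proof
  fix f :: "'a \<Rightarrow> complex"
  let ?\<delta>z = "\<lambda>w. if w = z then 1 else 0"
  define S where "S = (\<Sum>y\<in>A. cnj (c y) * f y)"
  define t where "t = - S / of_real s"
  \<comment> \<open>the reduced form at \<open>f\<close> is the original form at \<open>f + t \<delta>\<^sub>z\<close>\<close>
  have "sesq A (\<lambda>x y. K x y - c x * cnj (c y)) f f = sesq A K f f - sesq A (\<lambda>x y. c x * cnj (c y)) f f"
    unfolding sesq_def by (simp add: algebra_simps sum_subtractf)
  also have "\<dots> = sesq A K f f - cnj S * S"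
    using sesq_rank_one[OF S_def] by simp
  also have "\<dots> = sesq A K (\<lambda>x. 1 * f x + t * ?\<delta>z x) (\<lambda>x. 1 * f x + t * ?\<delta>z x)"
  proof -
    have "sesq A K f ?\<delta>z = (\<Sum>x\<in>A. cnj (f x) * K x z)" by (rule sesq_delta_right[OF A])
    also have "\<dots> = of_real s * cnj S"
      unfolding S_def cnj_sum sum_distrib_left by (intro sum.cong refl) (simp add: col)
    finally have f\<delta>: "sesq A K f ?\<delta>z = of_real s * cnj S" .
    have row: "K z y = of_real s * cnj (c y)" if "y \<in> A" for y
      using herm that A(2) col[OF that] unfolding hermitian_kernel_def by (metis complex_cnj_complex_of_real complex_cnj_mult)
    have "sesq A K ?\<delta>z f = (\<Sum>y\<in>A. K z y * f y)" by (rule sesq_delta_left[OF A])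
    also have "\<dots> = of_real s * S"
      unfolding S_def sum_distrib_left by (intro sum.cong refl) (simp add: row)
    finally have \<delta>f: "sesq A K ?\<delta>z f = of_real s * S" .
    have \<delta>\<delta>: "sesq A K ?\<delta>z ?\<delta>z = of_real s * of_real s"
      using sesq_delta[OF A(1,2,2)] col[OF A(2)] cz by simp
    have st: "of_real s * t = - S" "of_real s * cnj t = - cnj S"
      unfolding t_def using \<open>0 < s\<close> by simp_all
    have "sesq A K (\<lambda>x. 1 * f x + t * ?\<delta>z x) (\<lambda>x. 1 * f x + t * ?\<delta>z x)
        = cnj 1 * (1 * sesq A K f f + t * sesq A K f ?\<delta>z) + cnj t * (1 * sesq A K ?\<delta>z f + t * sesq A K ?\<delta>z ?\<delta>z)"
      by (simp only: sesq_lincomb_left sesq_lincomb_right)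
    also have "\<dots> = sesq A K f f + (of_real s * t) * cnj S + (of_real s * cnj t) * S
        + (of_real s * cnj t) * (of_real s * t)"
      unfolding f\<delta> \<delta>f \<delta>\<delta> by (simp add: algebra_simps)
    also have "\<dots> = sesq A K f f - cnj S * S"
      unfolding st by (simp add: algebra_simps)
    finally show ?thesis by simp
  qed
  finally have "sesq A (\<lambda>x y. K x y - c x * cnj (c y)) f f
      = sesq A K (\<lambda>x. 1 * f x + t * ?\<delta>z x) (\<lambda>x. 1 * f x + t * ?\<delta>z x)" .
  then show "0 \<le> sesq A (\<lambda>x y. K x y - c x * cnj (c y)) f f"
    using psd unfolding psd_kernel_def by (simp only:)
qed

lemma psd_kernel_peel:
  assumes A: "finite A" "z \<in> A" and herm: "hermitian_kernel A K" and psd: "psd_kernel A K"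
  obtains c where "psd_kernel A (\<lambda>x y. K x y - c x * cnj (c y))"
    and "\<And>x. x \<in> A \<Longrightarrow> K x z = c x * cnj (c z)"
proof (cases "K z z = 0")
  case True
  then have "K x z = 0" if "x \<in> A" for x
    using psd_kernel_zero_diag[OF A(1) herm psd that A(2)] by simp
  with that[of "\<lambda>_. 0"] psd show ?thesis by simp
next
  case False
  define \<delta> where "\<delta> = Re (K z z)"
  have "0 \<le> K z z" by (rule psd_kernel_diag_nonneg[OF A(1) psd A(2)])
  then have Kzz: "K z z = of_real \<delta>" and "0 < \<delta>"
    using False unfolding \<delta>_def less_eq_complex_def by (auto simp: complex_eq_iff)
  define s where "s = sqrt \<delta>"
  have "0 < s" "s * s = \<delta>" using \<open>0 < \<delta>\<close> unfolding s_def by simp_all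
  define c where "c x = K x z / of_real s" for x
  have col: "K x z = of_real s * c x" for x
    unfolding c_def using \<open>0 < s\<close> by simp
  have cz: "c z = of_real s"
    unfolding c_def Kzz using \<open>0 < s\<close> by (simp flip: \<open>s * s = \<delta>\<close>)
  show ?thesis
  proof (rule that)
    show "psd_kernel A (\<lambda>x y. K x y - c x * cnj (c y))"
      using psd_kernel_minus_column_outer[OF A herm psd \<open>0 < s\<close> col cz] .
    show "K x z = c x * cnj (c z)" for x
      unfolding cz col by simp
  qed
qed

lemma psd_kernel_gram:
  assumes "finite A" "hermitian_kernel A K" "psd_kernel A K"
  shows "\<exists>\<phi>. \<forall>x\<in>A. \<forall>y\<in>A. K x y = (\<Sum>r\<in>A. \<phi> r x * cnj (\<phi> r y))"
  using assms
proof (induction A arbitrary: K rule: finite_induct)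
  case empty
  then show ?case by simp
next
  case (insert z A)
  obtain c where psd': "psd_kernel (insert z A) (\<lambda>x y. K x y - c x * cnj (c y))"
    and col: "\<And>x. x \<in> insert z A \<Longrightarrow> K x z = c x * cnj (c z)"
    using psd_kernel_peel[OF _ _ insert.prems] insert.hyps(1) by blast
  let ?K' = "\<lambda>x y. K x y - c x * cnj (c y)"
  have herm_ins: "K y x = cnj (K x y)" if "x \<in> insert z A" "y \<in> insert z A" for x y
    using insert.prems(1) that unfolding hermitian_kernel_def by blast
  have "hermitian_kernel A ?K'"
    using hermitian_kernel_subset[OF _ hermitian_kernel_minus_outer[OF insert.prems(1)]] by blast
  moreover have "psd_kernel A ?K'"
    using psd_kernel_subset[OF _ _ psd'] insert.hyps(1) by blast
  ultimately obtain \<phi>' where \<phi>': "\<And>x y. x \<in> A \<Longrightarrow> y \<in> A \<Longrightarrow> ?K' x y = (\<Sum>r\<in>A. \<phi>' r x * cnj (\<phi>' r y))"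
    using insert.IH by blast
  have K'_z: "?K' x y = 0" if "x \<in> insert z A" "y \<in> insert z A" "x = z \<or> y = z" for x y
    using that(3)
  proof
    assume "y = z"
    then show ?thesis using col[OF that(1)] by simp
  next
    assume "x = z"
    then have "K x y = cnj (K y z)" using herm_ins[of y z] that(2) by simp
    then show ?thesis using col[OF that(2)] \<open>x = z\<close> by simp
  qed
  define \<phi> where "\<phi> r x = (if r = z then c x else if x \<in> A then \<phi>' r x else 0)" for r x
  have "K x y = (\<Sum>r\<in>insert z A. \<phi> r x * cnj (\<phi> r y))" if "x \<in> insert z A" "y \<in> insert z A" for x y
  proof -
    have "(\<Sum>r\<in>A. \<phi> r x * cnj (\<phi> r y)) = ?K' x y"
    proof (cases "x \<in> A \<and> y \<in> A")
      case True
      then show ?thesis using \<phi>' insert.hyps(2) unfolding \<phi>_def by (auto intro: sum.cong)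
    next
      case False
      with that have "x = z \<or> y = z" by auto
      moreover have "(\<Sum>r\<in>A. \<phi> r x * cnj (\<phi> r y)) = 0"
        using False insert.hyps(2) by (intro sum.neutral) (auto simp: \<phi>_def)
      ultimately show ?thesis using K'_z[OF that] by simp
    qed
    then show ?thesis using insert.hyps unfolding \<phi>_def by simp
  qed
  then show ?case by blast
qed

section \<open>Products of positive kernels\<close>

lemma psd_kernel_prod:
  fixes K :: "'m \<Rightarrow> 'b \<Rightarrow> 'b \<Rightarrow> complex" and X :: "'m \<Rightarrow> 'a \<Rightarrow> 'b"
  assumes "finite M"
    and factors: "\<And>m. m \<in> M \<Longrightarrow> finite (A m) \<and> hermitian_kernel (A m) (K m) \<and> psd_kernel (A m) (K m)"
    and X: "\<And>m p. m \<in> M \<Longrightarrow> p \<in> B \<Longrightarrow> X m p \<in> A m"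
  shows "psd_kernel B (\<lambda>p q. \<Prod>m\<in>M. K m (X m p) (X m q))"
  unfolding psd_kernel_def
proof
  fix f :: "'a \<Rightarrow> complex"
  have "\<forall>m\<in>M. \<exists>\<phi>. \<forall>x\<in>A m. \<forall>y\<in>A m. K m x y = (\<Sum>r\<in>A m. \<phi> r x * cnj (\<phi> r y))"
    using factors psd_kernel_gram by blast
  then obtain \<Phi> where \<Phi>: "\<And>m x y. m \<in> M \<Longrightarrow> x \<in> A m \<Longrightarrow> y \<in> A m \<Longrightarrow>
      K m x y = (\<Sum>r\<in>A m. \<Phi> m r x * cnj (\<Phi> m r y))"
    by metis
  define \<Psi> where "\<Psi> \<rho> p = (\<Prod>m\<in>M. \<Phi> m (\<rho> m) (X m p))" for \<rho> p
  have expand: "(\<Prod>m\<in>M. K m (X m p) (X m q)) = (\<Sum>\<rho>\<in>PiE M A. \<Psi> \<rho> p * cnj (\<Psi> \<rho> q))"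
    if "p \<in> B" "q \<in> B" for p q
  proof -
    have "(\<Prod>m\<in>M. K m (X m p) (X m q)) = (\<Prod>m\<in>M. \<Sum>r\<in>A m. \<Phi> m r (X m p) * cnj (\<Phi> m r (X m q)))"
      using that X by (intro prod.cong refl \<Phi>) auto
    also have "\<dots> = (\<Sum>\<rho>\<in>PiE M A. \<Prod>m\<in>M. \<Phi> m (\<rho> m) (X m p) * cnj (\<Phi> m (\<rho> m) (X m q)))"
      using \<open>finite M\<close> factors by (intro prod_sum_PiE) auto
    also have "\<dots> = (\<Sum>\<rho>\<in>PiE M A. \<Psi> \<rho> p * cnj (\<Psi> \<rho> q))"
      unfolding \<Psi>_def by (simp add: prod.distrib cnj_prod)
    finally show ?thesis .
  qed
  have "sesq B (\<lambda>p q. \<Prod>m\<in>M. K m (X m p) (X m q)) f f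
      = sesq B (\<lambda>p q. \<Sum>\<rho>\<in>PiE M A. \<Psi> \<rho> p * cnj (\<Psi> \<rho> q)) f f"
    using expand by (intro sesq_cong) auto
  also have "\<dots> = (\<Sum>\<rho>\<in>PiE M A. cnj (\<Sum>p\<in>B. cnj (\<Psi> \<rho> p) * f p) * (\<Sum>p\<in>B. cnj (\<Psi> \<rho> p) * f p))"
    unfolding sesq_sum_kernel by (intro sum.cong refl sesq_rank_one)
  also have "0 \<le> \<dots>"
    by (intro sum_nonneg) (metis conjugate_square_positive mult.commute conjugate_complex_def)
  finally show "0 \<le> sesq B (\<lambda>p q. \<Prod>m\<in>M. K m (X m p) (X m q)) f f" .
qed

lemma hermitian_kernel_of_state:
  assumes "is_state D A"
  shows "hermitian_kernel {..<D} (\<lambda>x y. A $$ (x, y))"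
  unfolding hermitian_kernel_def
proof (intro ballI)
  fix x y assume "x \<in> {..<D}" "y \<in> {..<D}"
  moreover have "A \<in> carrier_mat D D" using assms unfolding is_state_def by simp
  ultimately have "mat_adjoint A $$ (y, x) = cnj (A $$ (x, y))"
    unfolding mat_adjoint_def by (simp add: mat_of_rows_index)
  moreover have "mat_adjoint A = A" using assms unfolding is_state_def by simp
  ultimately show "A $$ (y, x) = cnj (A $$ (x, y))" by simp
qed

lemma psd_kernel_of_state:
  assumes "is_state D A"
  shows "psd_kernel {..<D} (\<lambda>x y. A $$ (x, y))"
  unfolding psd_kernel_def
proof
  fix f :: "nat \<Rightarrow> complex"
  have A: "A \<in> carrier_mat D D" using assms unfolding is_state_def by simp
  have "0 \<le> (A *\<^sub>v vec D f) \<bullet>c vec D f" using assms unfolding is_state_def by simp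
  also have "(A *\<^sub>v vec D f) \<bullet>c vec D f = (\<Sum>x<D. (\<Sum>y<D. A $$ (x, y) * f y) * cnj (f x))"
    using A by (simp add: scalar_prod_def atLeast0LessThan row_def)
  also have "\<dots> = sesq {..<D} (\<lambda>x y. A $$ (x, y)) f f"
    unfolding sesq_def by (simp add: sum_distrib_left sum_distrib_right mult_ac)
  finally show "0 \<le> sesq {..<D} (\<lambda>x y. A $$ (x, y)) f f" .
qed

section \<open>Partial transpose and realignment of kernels on pairs\<close>

definition pt_kernel :: "('a \<times> 'a \<Rightarrow> 'a \<times> 'a \<Rightarrow> complex) \<Rightarrow> 'a \<times> 'a \<Rightarrow> 'a \<times> 'a \<Rightarrow> complex"
  where "pt_kernel G = (\<lambda>(i, j) (i', j'). G (i, j') (i', j))"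

definition realignment_invariant :: "'a set \<Rightarrow> ('a \<times> 'a \<Rightarrow> 'a \<times> 'a \<Rightarrow> complex) \<Rightarrow> bool"
  where "realignment_invariant S G \<longleftrightarrow>
    (\<forall>i\<in>S. \<forall>j\<in>S. \<forall>i'\<in>S. \<forall>j'\<in>S. G (i, j) (i', j') = G (i, i') (j, j'))"

lemma pt_kernel_apply [simp]: "pt_kernel G (i, j) (i', j') = G (i, j') (i', j)"
  by (simp add: pt_kernel_def)

lemma sesq_pairs:
  "sesq (S \<times> S) K f g
    = (\<Sum>i\<in>S. \<Sum>j\<in>S. \<Sum>i'\<in>S. \<Sum>j'\<in>S. cnj (f (i, j)) * K (i, j) (i', j') * g (i', j'))"
  unfolding sesq_def sum.cartesian_product' ..

lemma hermitian_kernel_pt: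
  assumes "hermitian_kernel (S \<times> S) G"
  shows "hermitian_kernel (S \<times> S) (pt_kernel G)"
  unfolding hermitian_kernel_def
proof (intro ballI)
  fix p q assume "p \<in> S \<times> S" "q \<in> S \<times> S"
  then obtain i j i' j' where pq: "p = (i, j)" "q = (i', j')" and "(i, j') \<in> S \<times> S" "(i', j) \<in> S \<times> S"
    by auto
  then have "G (i', j) (i, j') = cnj (G (i, j') (i', j))"
    using assms unfolding hermitian_kernel_def by blast
  then show "pt_kernel G q p = cnj (pt_kernel G p q)" unfolding pq by simp
qed

lemma sesq_pt_swap_right:
  assumes "realignment_invariant S G"
  shows "sesq (S \<times> S) (pt_kernel G) f (g \<circ> prod.swap) = sesq (S \<times> S) (pt_kernel G) f g"
  unfolding sesq_def
proof (rule sum.cong[OF refl])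
  fix p assume p: "p \<in> S \<times> S"
  have "(\<Sum>q\<in>S \<times> S. cnj (f p) * pt_kernel G p q * (g \<circ> prod.swap) q)
      = (\<Sum>q\<in>prod.swap ` (S \<times> S). cnj (f p) * pt_kernel G p (prod.swap q) * g q)"
    by (simp add: sum.reindex comp_def)
  also have "\<dots> = (\<Sum>q\<in>S \<times> S. cnj (f p) * pt_kernel G p q * g q)"
    unfolding product_swap
  proof (intro sum.cong refl)
    fix q assume "q \<in> S \<times> S"
    with p assms show "cnj (f p) * pt_kernel G p (prod.swap q) * g q = cnj (f p) * pt_kernel G p q * g q"
      unfolding realignment_invariant_def by (cases p, cases q) auto
  qed
  finally show "(\<Sum>q\<in>S \<times> S. cnj (f p) * pt_kernel G p q * (g \<circ> prod.swap) q)
      = (\<Sum>q\<in>S \<times> S. cnj (f p) * pt_kernel G p q * g q)" .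
qed

lemma sesq_pt_swap_left:
  assumes "hermitian_kernel (S \<times> S) G" "realignment_invariant S G"
  shows "sesq (S \<times> S) (pt_kernel G) (f \<circ> prod.swap) g = sesq (S \<times> S) (pt_kernel G) f g"
  using sesq_pt_swap_right[OF assms(2), of g f] hermitian_kernel_pt[OF assms(1)]
  by (metis sesq_conj_swap)

lemma sum_reverse3:
  "(\<Sum>a\<in>A. \<Sum>b\<in>A. \<Sum>c\<in>A. F a b c) = (\<Sum>c\<in>A. \<Sum>b\<in>A. \<Sum>a\<in>A. F a b c)"
proof -
  have "(\<Sum>a\<in>A. \<Sum>b\<in>A. \<Sum>c\<in>A. F a b c) = (\<Sum>b\<in>A. \<Sum>a\<in>A. \<Sum>c\<in>A. F a b c)"
    by (rule sum.swap)
  also have "\<dots> = (\<Sum>b\<in>A. \<Sum>c\<in>A. \<Sum>a\<in>A. F a b c)"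
    by (rule sum.cong[OF refl], rule sum.swap)
  also have "\<dots> = (\<Sum>c\<in>A. \<Sum>b\<in>A. \<Sum>a\<in>A. F a b c)"
    by (rule sum.swap)
  finally show ?thesis .
qed

definition tensor :: "('a \<Rightarrow> complex) \<Rightarrow> ('a \<Rightarrow> complex) \<Rightarrow> 'a \<times> 'a \<Rightarrow> complex"
  where "tensor x y = (\<lambda>(i, j). x i * y j)"

lemma tensor_apply [simp]: "tensor x y (i, j) = x i * y j"
  by (simp add: tensor_def)

lemma sesq_pt_tensor:
  "sesq (S \<times> S) (pt_kernel G) (tensor x x') (tensor y y')
    = sesq (S \<times> S) G (tensor x (\<lambda>j. cnj (y' j))) (tensor y (\<lambda>j. cnj (x' j)))"
proof -
  have "sesq (S \<times> S) (pt_kernel G) (tensor x x') (tensor y y')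
      = (\<Sum>i\<in>S. \<Sum>j\<in>S. \<Sum>i'\<in>S. \<Sum>j'\<in>S. cnj (x i * x' j) * G (i, j') (i', j) * (y i' * y' j'))"
    unfolding sesq_pairs by simp
  also have "\<dots> = (\<Sum>i\<in>S. \<Sum>j'\<in>S. \<Sum>i'\<in>S. \<Sum>j\<in>S. cnj (x i * x' j) * G (i, j') (i', j) * (y i' * y' j'))"
    by (rule sum.cong[OF refl], rule sum_reverse3)
  also have "\<dots> = sesq (S \<times> S) G (tensor x (\<lambda>j. cnj (y' j))) (tensor y (\<lambda>j. cnj (x' j)))"
    unfolding sesq_pairs by (intro sum.cong refl) (simp add: mult_ac)
  finally show ?thesis .
qed

lemma sesq_realign_tensor:
  assumes "realignment_invariant S G"
  shows "sesq (S \<times> S) G (tensor x x') (tensor y y')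
    = sesq (S \<times> S) G (tensor x (\<lambda>j. cnj (y j))) (tensor (\<lambda>i. cnj (x' i)) y')"
proof -
  have "sesq (S \<times> S) G (tensor x x') (tensor y y')
      = (\<Sum>i\<in>S. \<Sum>i'\<in>S. \<Sum>j\<in>S. \<Sum>j'\<in>S. cnj (x i * x' j) * G (i, j) (i', j') * (y i' * y' j'))"
    unfolding sesq_pairs by simp (rule sum.cong[OF refl], rule sum.swap)
  also have "\<dots> = (\<Sum>i\<in>S. \<Sum>i'\<in>S. \<Sum>j\<in>S. \<Sum>j'\<in>S. cnj (x i * x' j) * G (i, i') (j, j') * (y i' * y' j'))"
    using assms unfolding realignment_invariant_def by (intro sum.cong refl) simp
  also have "\<dots> = sesq (S \<times> S) G (tensor x (\<lambda>j. cnj (y j))) (tensor (\<lambda>i. cnj (x' i)) y')"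
    unfolding sesq_pairs by (intro sum.cong refl) (simp add: mult_ac)
  finally show ?thesis .
qed

lemma sesq_pt_symmetrize:
  fixes v :: "'a \<times> 'a \<Rightarrow> complex"
  assumes "hermitian_kernel (S \<times> S) G" "realignment_invariant S G"
  defines "s \<equiv> \<lambda>p. (v p + v (prod.swap p)) / 2"
  shows "sesq (S \<times> S) (pt_kernel G) v v = sesq (S \<times> S) (pt_kernel G) s s"
proof -
  let ?T = "sesq (S \<times> S) (pt_kernel G)"
  have s: "s = (\<lambda>p. 1/2 * v p + 1/2 * (v \<circ> prod.swap) p)"
    unfolding s_def by (simp add: fun_eq_iff field_simps)
  have "?T s s = 1/2 * ?T s v + 1/2 * ?T s (v \<circ> prod.swap)"
    by (subst (2) s) (rule sesq_lincomb_right)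
  also have "\<dots> = ?T s v" unfolding sesq_pt_swap_right[OF assms(2)] by simp
  also have "\<dots> = 1/2 * ?T v v + 1/2 * ?T (v \<circ> prod.swap) v"
    unfolding s sesq_lincomb_left by (simp add: comp_def)
  also have "\<dots> = ?T v v" unfolding sesq_pt_swap_left[OF assms(1,2)] by simp
  finally show ?thesis ..
qed

lemma nonneg_add_two_Re_of_cmod_bound:
  fixes a b d :: real and c :: complex
  assumes "0 \<le> a" "0 \<le> b" "0 \<le> d" "(cmod c)\<^sup>2 \<le> d\<^sup>2" "d\<^sup>2 \<le> a * b"
  shows "0 \<le> a + b + 2 * Re c"
proof -
  have "cmod c \<le> d" using power2_le_imp_le[OF assms(4,3)] .
  moreover have "- Re c \<le> cmod c" using abs_Re_le_cmod[of c] by linarith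
  moreover have "(2 * d)\<^sup>2 \<le> (a + b)\<^sup>2"
    using assms(5) zero_le_power2[of "a - b"] by (simp add: power2_eq_square algebra_simps)
  then have "2 * d \<le> a + b" by (rule power2_le_imp_le) (use assms(1,2) in simp)
  ultimately show ?thesis by linarith
qed

lemma re_sesq_pt_sum_two_tensor_squares_nonneg:
  fixes y1 y2 :: "'a \<Rightarrow> complex"
  assumes herm: "hermitian_kernel (S \<times> S) G" and psd: "psd_kernel (S \<times> S) G"
    and ri: "realignment_invariant S G"
  defines "p \<equiv> \<lambda>q. tensor y1 y1 q + tensor y2 y2 q"
  shows "0 \<le> Re (sesq (S \<times> S) (pt_kernel G) p p)"
proof -
  let ?T = "sesq (S \<times> S) (pt_kernel G)" and ?Q = "sesq (S \<times> S) G"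
  let ?e = "\<lambda>a b. tensor a (\<lambda>j. cnj (b j))"
  define A where "A = ?Q (?e y1 y1) (?e y1 y1)"
  define B where "B = ?Q (?e y2 y2) (?e y2 y2)"
  define C where "C = ?Q (?e y1 y2) (?e y2 y1)"
  define D where "D = ?Q (?e y1 y1) (?e y2 y2)"
  have "?T p p = ?T (tensor y1 y1) (tensor y1 y1) + ?T (tensor y1 y1) (tensor y2 y2)
      + (?T (tensor y2 y2) (tensor y1 y1) + ?T (tensor y2 y2) (tensor y2 y2))"
    unfolding p_def sesq_add_left sesq_add_right ..
  also have "\<dots> = A + C + (cnj C + B)"
    unfolding sesq_pt_tensor A_def B_def C_def sesq_conj_swap[OF herm, of "?e y2 y1"] ..
  finally have expand: "Re (?T p p) = Re A + Re B + 2 * Re C" by simp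
  \<comment> \<open>realignment identifies the diagonal values at \<open>e\<^sub>1\<^sub>2\<close> and \<open>e\<^sub>2\<^sub>1\<close> with the cross value \<open>D\<close>\<close>
  have D12: "?Q (?e y1 y2) (?e y1 y2) = D"
    unfolding D_def sesq_realign_tensor[OF ri, of y1 _ y1] by simp
  have D21: "?Q (?e y2 y1) (?e y2 y1) = cnj D"
    unfolding D_def sesq_realign_tensor[OF ri, of y2 _ y2] sesq_conj_swap[OF herm, of "?e y1 y1"] by simp
  have "(cmod C)\<^sup>2 \<le> (Re D)\<^sup>2"
    using sesq_cauchy_schwarz[OF herm psd, of "?e y1 y2" "?e y2 y1"]
    unfolding C_def[symmetric] D12 D21 by (simp add: power2_eq_square)
  moreover have "0 \<le> Re D" using psd_kernel_nonneg_re[OF psd, of "?e y1 y2"] unfolding D12 .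
  moreover have "(Re D)\<^sup>2 \<le> Re A * Re B"
  proof -
    have "(Re D)\<^sup>2 \<le> (cmod D)\<^sup>2" using abs_Re_le_cmod[of D] by (metis abs_ge_zero power2_abs power_mono)
    also have "\<dots> \<le> Re A * Re B"
      using sesq_cauchy_schwarz[OF herm psd] unfolding A_def B_def D_def .
    finally show ?thesis .
  qed
  ultimately show ?thesis unfolding expand
    using nonneg_add_two_Re_of_cmod_bound psd_kernel_nonneg_re[OF psd] A_def B_def by metis
qed

lemma sesq_pt_nonneg_of_symmetric_part:
  assumes herm: "hermitian_kernel (S \<times> S) G" and psd: "psd_kernel (S \<times> S) G"
    and ri: "realignment_invariant S G"
    and sym: "\<And>q. q \<in> S \<times> S \<Longrightarrow> v q + v (prod.swap q) = 2 * (tensor y1 y1 q + tensor y2 y2 q)"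
  shows "0 \<le> sesq (S \<times> S) (pt_kernel G) v v"
proof -
  let ?T = "sesq (S \<times> S) (pt_kernel G)" and ?p = "\<lambda>q. tensor y1 y1 q + tensor y2 y2 q"
  have "?T v v = ?T (\<lambda>q. (v q + v (prod.swap q)) / 2) (\<lambda>q. (v q + v (prod.swap q)) / 2)"
    by (rule sesq_pt_symmetrize[OF herm ri])
  also have "\<dots> = ?T ?p ?p" using sym by (intro sesq_cong) simp_all
  finally have "0 \<le> Re (?T v v)" using re_sesq_pt_sum_two_tensor_squares_nonneg[OF herm psd ri] by simp
  moreover have "Im (?T v v) = 0"
    using sesq_conj_swap[OF hermitian_kernel_pt[OF herm], of v v] by (metis cnj.simps(2) neg_equal_zero)
  ultimately show ?thesis by (simp add: less_eq_complex_def)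
qed

section \<open>The shuffle kernel\<close>

definition pair_digit :: "nat \<Rightarrow> nat \<Rightarrow> nat \<Rightarrow> nat \<times> nat \<Rightarrow> nat"
  where "pair_digit k n m = (\<lambda>(I, J). digit k n m I * k + digit k n m J)"

definition shuffle_kernel :: "nat \<Rightarrow> nat \<Rightarrow> (nat \<Rightarrow> complex mat) \<Rightarrow> nat \<times> nat \<Rightarrow> nat \<times> nat \<Rightarrow> complex"
  where "shuffle_kernel k n \<gamma> p q = (\<Prod>m<n. \<gamma> m $$ (pair_digit k n m p, pair_digit k n m q))"

lemma pair_index_less:
  assumes "i < k" "j < (k::nat)"
  shows "i * k + j < k * k"
proof -
  have "i * k + j < (i + 1) * k" using assms(2) by simp
  also have "\<dots> \<le> k * k" using assms(1) by (intro mult_right_mono) auto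
  finally show ?thesis .
qed

lemma digit_less: "m < n \<Longrightarrow> I < k ^ n \<Longrightarrow> digit k n m I < k"
  unfolding digit_def by (cases "k = 0") (auto simp: power_0_left)

lemma pair_digit_less:
  "m < n \<Longrightarrow> p \<in> {..<k ^ n} \<times> {..<k ^ n} \<Longrightarrow> pair_digit k n m p < k * k"
  unfolding pair_digit_def by (auto intro: pair_index_less digit_less)

lemma shuffle_kernel_hermitian:
  assumes "\<And>m. m < n \<Longrightarrow> is_state (k * k) (\<gamma> m)"
  shows "hermitian_kernel ({..<k ^ n} \<times> {..<k ^ n}) (shuffle_kernel k n \<gamma>)"
  unfolding hermitian_kernel_def shuffle_kernel_def cnj_prod
proof (intro ballI prod.cong refl)
  fix p q m assume "p \<in> {..<k ^ n} \<times> {..<k ^ n}" "q \<in> {..<k ^ n} \<times> {..<k ^ n}" "m \<in> {..<n}"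
  then show "\<gamma> m $$ (pair_digit k n m q, pair_digit k n m p) = cnj (\<gamma> m $$ (pair_digit k n m p, pair_digit k n m q))"
    using hermitian_kernel_of_state[OF assms] pair_digit_less unfolding hermitian_kernel_def by blast
qed

lemma shuffle_kernel_psd:
  assumes "\<And>m. m < n \<Longrightarrow> is_state (k * k) (\<gamma> m)"
  shows "psd_kernel ({..<k ^ n} \<times> {..<k ^ n}) (shuffle_kernel k n \<gamma>)"
  unfolding shuffle_kernel_def
  using hermitian_kernel_of_state[OF assms] psd_kernel_of_state[OF assms] pair_digit_less
  by (intro psd_kernel_prod[where A = "\<lambda>_. {..<k * k}"]) auto

lemma realign_entry:
  assumes "i < k" "j < k" "i' < k" "j' < k"
  shows "realign k G $$ (i * k + j, i' * k + j') = G $$ (i * k + i', j * k + j')"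
  unfolding realign_def using assms pair_index_less[OF assms(1,2)] pair_index_less[OF assms(3,4)] by simp

lemma ptrans_entry:
  assumes "i < k" "j < k" "i' < k" "j' < k"
  shows "ptrans k G $$ (i * k + j, i' * k + j') = G $$ (i * k + j', i' * k + j)"
  unfolding ptrans_def using assms pair_index_less[OF assms(1,2)] pair_index_less[OF assms(3,4)] by simp

lemma shuffle_kernel_realignment_invariant:
  assumes "\<And>m. m < n \<Longrightarrow> realign k (\<gamma> m) = \<gamma> m"
  shows "realignment_invariant {..<k ^ n} (shuffle_kernel k n \<gamma>)"
  unfolding realignment_invariant_def shuffle_kernel_def
proof (intro ballI prod.cong refl)
  fix I J I' J' m assume "I \<in> {..<k ^ n}" "J \<in> {..<k ^ n}" "I' \<in> {..<k ^ n}" "J' \<in> {..<k ^ n}" "m \<in> {..<n}"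
  then show "\<gamma> m $$ (pair_digit k n m (I, J), pair_digit k n m (I', J'))
      = \<gamma> m $$ (pair_digit k n m (I, I'), pair_digit k n m (J, J'))"
    using realign_entry[of "digit k n m _" k, where G = "\<gamma> m"] assms[of m]
    unfolding pair_digit_def by (simp add: digit_less)
qed

lemma sum_lessThan_mult:
  "(\<Sum>i<a * b. F i) = (\<Sum>x<a. \<Sum>y<(b::nat). F (x * b + y))"
proof -
  have "(\<Sum>i<a * b. F i) = (\<Sum>x<a. sum F {x * b..<x * b + b})"
    by (rule sum.nat_group[symmetric])
  also have "\<dots> = (\<Sum>x<a. \<Sum>y<b. F (x * b + y))"
  proof (rule sum.cong[OF refl])
    fix x
    have "sum F {x * b..<x * b + b} = sum F {0 + x * b..<b + x * b}" by (simp add: add.commute)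
    also have "\<dots> = (\<Sum>y\<in>{0..<b}. F (y + x * b))" by (rule sum.shift_bounds_nat_ivl)
    finally show "sum F {x * b..<x * b + b} = (\<Sum>y<b. F (x * b + y))"
      by (simp add: atLeast0LessThan add.commute)
  qed
  finally show ?thesis .
qed

lemma sesq_lessThan_mult:
  fixes N :: nat
  shows "sesq {..<N * N} K f g
    = sesq ({..<N} \<times> {..<N}) (\<lambda>(I, J) (I', J'). K (I * N + J) (I' * N + J'))
        (\<lambda>(I, J). f (I * N + J)) (\<lambda>(I, J). g (I * N + J))"
proof -
  have "sesq {..<N * N} K f g = (\<Sum>i<N. \<Sum>j<N. \<Sum>i'<N. \<Sum>j'<N.
      cnj (f (i * N + j)) * K (i * N + j) (i' * N + j') * g (i' * N + j'))"
    unfolding sesq_def sum_lessThan_mult ..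
  then show ?thesis by (simp only: sesq_pairs case_prod_conv)
qed

lemma trace_mult_outer:
  assumes "A \<in> carrier_mat D D" "w \<in> carrier_vec D"
  shows "trace (A * outer w) = sesq {..<D} (\<lambda>i j. A $$ (i, j)) (\<lambda>i. w $ i) (\<lambda>i. w $ i)"
  using assms unfolding trace_def outer_def sesq_def
  by (simp add: scalar_prod_def atLeast0LessThan sum_distrib_left mult_ac)

lemma shuffle_ptrans_entry:
  assumes "I < k ^ n" "J < k ^ n" "I' < k ^ n" "J' < k ^ n"
  shows "shuffle k n (\<lambda>i. ptrans k (\<gamma> i)) $$ (I * k ^ n + J, I' * k ^ n + J')
    = pt_kernel (shuffle_kernel k n \<gamma>) (I, J) (I', J')"
proof -
  have "I * k ^ n + J < k ^ n * k ^ n" "I' * k ^ n + J' < k ^ n * k ^ n"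
    using assms by (simp_all add: pair_index_less)
  then have "shuffle k n (\<lambda>i. ptrans k (\<gamma> i)) $$ (I * k ^ n + J, I' * k ^ n + J')
      = (\<Prod>m<n. ptrans k (\<gamma> m) $$
          (pair_digit k n m ((I * k ^ n + J) div k ^ n, (I * k ^ n + J) mod k ^ n),
           pair_digit k n m ((I' * k ^ n + J') div k ^ n, (I' * k ^ n + J') mod k ^ n)))"
    unfolding shuffle_def Let_def pair_digit_def by simp
  also have "\<dots> = (\<Prod>m<n. ptrans k (\<gamma> m) $$ (pair_digit k n m (I, J), pair_digit k n m (I', J')))"
  proof -
    \<comment> \<open>stated for a variable \<open>N\<close>: with \<open>N = k ^ n\<close> the simplifier cannot see \<open>N \<noteq> 0\<close>\<close>
    have dm: "(p * N + q) div N = p" "(p * N + q) mod N = q" if "q < N" for p q N :: nat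
      using that by simp_all
    show ?thesis unfolding dm[OF assms(2)] dm[OF assms(4)] ..
  qed
  also have "\<dots> = shuffle_kernel k n \<gamma> (I, J') (I', J)"
    unfolding shuffle_kernel_def pair_digit_def using assms
    by (intro prod.cong refl) (simp add: ptrans_entry digit_less)
  finally show ?thesis by simp
qed

lemma trace_shuffle_ptrans_outer:
  assumes "w \<in> carrier_vec (k ^ n * k ^ n)"
  shows "trace (shuffle k n (\<lambda>i. ptrans k (\<gamma> i)) * outer w)
    = sesq ({..<k ^ n} \<times> {..<k ^ n}) (pt_kernel (shuffle_kernel k n \<gamma>))
        (\<lambda>(I, J). w $ (I * k ^ n + J)) (\<lambda>(I, J). w $ (I * k ^ n + J))"
proof -
  have "shuffle k n (\<lambda>i. ptrans k (\<gamma> i)) \<in> carrier_mat (k ^ n * k ^ n) (k ^ n * k ^ n)"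
    unfolding shuffle_def Let_def by simp
  from trace_mult_outer[OF this assms] show ?thesis
    unfolding sesq_lessThan_mult by (auto intro!: sesq_cong simp: shuffle_ptrans_entry)
qed

lemma kron_vec_carrier: "kron_vec N a b \<in> carrier_vec (N * N)"
  unfolding kron_vec_def by simp

lemma kron_vec_add_entry:
  assumes "I < N" "J < N"
  shows "(kron_vec N a b + kron_vec N c d) $ (I * N + J) = a $ I * b $ J + c $ I * d $ J"
  using assms pair_index_less[OF assms] unfolding kron_vec_def by simp

section \<open>Symmetric parts of tensors of rank two\<close>

lemma (in vec_space) span_two_coords:
  assumes "u1 \<in> carrier_vec n" "u2 \<in> carrier_vec n" "x \<in> span {u1, u2}"
  shows "\<exists>\<alpha> \<beta>. \<forall>i<n. x $ i = \<alpha> * u1 $ i + \<beta> * u2 $ i"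
proof -
  obtain f T where x: "x = lincomb f T" and "finite T" and T: "T \<subseteq> {u1, u2}"
    using in_spanE[OF assms(3)] by blast
  have xi: "x $ i = (\<Sum>v\<in>T. f v * v $ i)" if "i < n" for i
    unfolding x using lincomb_index[OF that] T assms(1,2) by blast
  consider "T = {}" | "T = {u1}" | "T = {u2}" | "T = {u1, u2}" "u1 \<noteq> u2" | "T = {u1, u2}" "u1 = u2"
    using T by blast
  then show ?thesis
  proof cases
    case 1 then show ?thesis using xi by (intro exI[of _ 0]) auto
  next
    case 2 then show ?thesis using xi by (intro exI[of _ "f u1"] exI[of _ 0]) auto
  next
    case 3 then show ?thesis using xi by (intro exI[of _ 0] exI[of _ "f u2"]) auto
  next
    case 4 then show ?thesis using xi by (intro exI[of _ "f u1"] exI[of _ "f u2"]) auto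
  next
    case 5 then show ?thesis using xi by (intro exI[of _ "f u1"] exI[of _ 0]) auto
  qed
qed

lemma rank_two_cols_span:
  fixes vs :: "'a :: field vec list"
  assumes "set vs \<subseteq> carrier_vec N" "vec_space.rank N (mat_of_cols N vs) = 2"
  shows "\<exists>u1 u2. \<forall>x\<in>set vs. \<exists>\<alpha> \<beta>. \<forall>i<N. x $ i = \<alpha> * u1 $ i + \<beta> * u2 $ i"
proof -
  interpret V: vec_space "TYPE('a)" N .
  let ?A = "mat_of_cols N vs"
  have A: "?A \<in> carrier_mat N (length vs)" by simp
  have cols: "set (cols ?A) = set vs" using assms(1) by (simp add: cols_mat_of_cols)
  obtain S where S: "maximal S (\<lambda>T. T \<subseteq> set (cols ?A) \<and> V.lin_indpt T)"
    using maximal_exists_superset[of "set (cols ?A)" "\<lambda>T. T \<subseteq> set (cols ?A) \<and> V.lin_indpt T" "{}"]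
    unfolding V.lin_dep_def by auto
  have "card S = 2" using V.rank_card_indpt[OF A S] assms(2) by simp
  then obtain u1 u2 where S12: "S = {u1, u2}" by (auto simp: card_Suc_eq numeral_2_eq_2)
  have SA: "S \<subseteq> set vs" and indS: "V.lin_indpt S" using S cols unfolding maximal_def by auto
  have SC: "S \<subseteq> carrier_vec N" using SA assms(1) by auto
  have "x \<in> V.span S" if x: "x \<in> set vs" for x
  proof (rule ccontr)
    assume nx: "x \<notin> V.span S"
    then have "x \<notin> S" using V.in_own_span[OF SC] by auto
    moreover have "x \<in> carrier_vec N" using x assms(1) by auto
    ultimately have "V.lin_indpt (S \<union> {x})" using V.lin_dep_iff_in_span[OF SC indS] nx by simp
    moreover have "S \<union> {x} \<subseteq> set (cols ?A)" using SA x cols by auto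
    ultimately have "S \<union> {x} = S" using S unfolding maximal_def by blast
    with \<open>x \<notin> S\<close> show False by auto
  qed
  then show ?thesis using V.span_two_coords SC unfolding S12 by blast
qed

lemma complex_symmetric_2x2_factor:
  fixes A B C :: complex
  shows "\<exists>x11 x12 x21 x22. x11 * x11 + x21 * x21 = A \<and> x11 * x12 + x21 * x22 = B \<and> x12 * x12 + x22 * x22 = C"
proof (cases "A = 0")
  case False
  define s where "s = csqrt A"
  define t where "t = csqrt (C - B * B / A)"
  have "s * s = A" "t * t = C - B * B / A"
    unfolding s_def t_def using power2_csqrt by (simp_all add: power2_eq_square)
  with False show ?thesis
    by (intro exI[of _ s] exI[of _ "B / s"] exI[of _ 0] exI[of _ t]) (auto simp: field_simps)
next
  case A0: True
  show ?thesis
  proof (cases "B = 0")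
    case True
    have "csqrt C * csqrt C = C" using power2_csqrt by (simp add: power2_eq_square)
    with A0 True show ?thesis by (intro exI[of _ 0] exI[of _ "csqrt C"] exI[of _ 0] exI[of _ 0]) simp
  next
    case False
    \<comment> \<open>with \<open>A = 0\<close> the first column must be isotropic, so take \<open>(1, \<i>)\<close>\<close>
    define p where "p = (B + C / B) / 2"
    define q where "q = - \<i> * (B - C / B) / 2"
    have "1 * p + \<i> * q = B" "p * p + q * q = C"
      unfolding p_def q_def using False by (simp_all add: field_simps power2_eq_square)
    with A0 show ?thesis by (intro exI[of _ 1] exI[of _ p] exI[of _ \<i>] exI[of _ q]) simp
  qed
qed

lemma symmetric_part_in_two_dim_span:
  fixes a b c d u1 u2 :: "'a \<Rightarrow> complex"
  assumes "\<And>x. x \<in> {a, b, c, d} \<Longrightarrow> \<exists>\<alpha> \<beta>. \<forall>i\<in>S. x i = \<alpha> * u1 i + \<beta> * u2 i"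
  defines "v \<equiv> \<lambda>q. tensor a b q + tensor c d q"
  shows "\<exists>y1 y2. \<forall>q\<in>S \<times> S. v q + v (prod.swap q) = 2 * (tensor y1 y1 q + tensor y2 y2 q)"
proof -
  obtain \<alpha>1 \<alpha>2 \<beta>1 \<beta>2 \<gamma>1 \<gamma>2 \<delta>1 \<delta>2 where
    a: "\<And>i. i \<in> S \<Longrightarrow> a i = \<alpha>1 * u1 i + \<alpha>2 * u2 i" and
    b: "\<And>i. i \<in> S \<Longrightarrow> b i = \<beta>1 * u1 i + \<beta>2 * u2 i" and
    c: "\<And>i. i \<in> S \<Longrightarrow> c i = \<gamma>1 * u1 i + \<gamma>2 * u2 i" and
    d: "\<And>i. i \<in> S \<Longrightarrow> d i = \<delta>1 * u1 i + \<delta>2 * u2 i"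
    using assms(1) by (metis insert_iff)
  \<comment> \<open>the symmetric part has coefficient matrix \<open>[[S11, T12/2], [T12/2, S22]]\<close> in the basis \<open>u1, u2\<close>\<close>
  define S11 where "S11 = \<alpha>1 * \<beta>1 + \<gamma>1 * \<delta>1"
  define S22 where "S22 = \<alpha>2 * \<beta>2 + \<gamma>2 * \<delta>2"
  define T12 where "T12 = \<alpha>1 * \<beta>2 + \<alpha>2 * \<beta>1 + \<gamma>1 * \<delta>2 + \<gamma>2 * \<delta>1"
  obtain x11 x12 x21 x22 where
    x: "x11 * x11 + x21 * x21 = S11" "x11 * x12 + x21 * x22 = T12 / 2" "x12 * x12 + x22 * x22 = S22"
    using complex_symmetric_2x2_factor by blast
  define y1 where "y1 i = x11 * u1 i + x12 * u2 i" for i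
  define y2 where "y2 i = x21 * u1 i + x22 * u2 i" for i
  have "v q + v (prod.swap q) = 2 * (tensor y1 y1 q + tensor y2 y2 q)" if q: "q \<in> S \<times> S" for q
  proof -
    obtain i j where q: "q = (i, j)" and ij: "i \<in> S" "j \<in> S" using q by auto
    let ?p11 = "u1 i * u1 j" and ?p22 = "u2 i * u2 j" and ?p12 = "u1 i * u2 j + u2 i * u1 j"
    have "v q + v (prod.swap q) = 2 * (S11 * ?p11) + T12 * ?p12 + 2 * (S22 * ?p22)"
      unfolding v_def q using ij
      by (simp add: a b c d S11_def S22_def T12_def algebra_simps)
    also have "\<dots> = 2 * ((x11 * x11 + x21 * x21) * ?p11 + (x11 * x12 + x21 * x22) * ?p12
        + (x12 * x12 + x22 * x22) * ?p22)"
      unfolding x by (simp add: algebra_simps)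
    also have "\<dots> = 2 * (tensor y1 y1 q + tensor y2 y2 q)"
      unfolding q y1_def y2_def by (simp add: algebra_simps)
    finally show ?thesis .
  qed
  then show ?thesis by blast
qed

lemma trace_shuffle_ptrans_outer_nonneg:
  assumes states: "\<And>i. i < n \<Longrightarrow> is_state (k * k) (\<gamma> i)"
    and realigned: "\<And>i. i < n \<Longrightarrow> realign k (\<gamma> i) = \<gamma> i"
    and abcd: "set [a, b, c, d] \<subseteq> carrier_vec (k ^ n)"
    and rank: "vec_space.rank (k ^ n) (mat_of_cols (k ^ n) [a, b, c, d]) = 2"
  shows "0 \<le> trace (shuffle k n (\<lambda>i. ptrans k (\<gamma> i)) * outer (kron_vec (k ^ n) a b + kron_vec (k ^ n) c d))"
proof -
  let ?S = "{..<k ^ n}" and ?G = "shuffle_kernel k n \<gamma>"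
  define v where "v = (\<lambda>q. tensor (($) a) (($) b) q + tensor (($) c) (($) d) q)"
  obtain u1 u2 where "\<forall>x\<in>set [a, b, c, d]. \<exists>\<alpha> \<beta>. \<forall>i<k ^ n. x $ i = \<alpha> * u1 $ i + \<beta> * u2 $ i"
    using rank_two_cols_span[OF abcd rank] by blast
  then have "\<exists>\<alpha> \<beta>. \<forall>i\<in>?S. x i = \<alpha> * u1 $ i + \<beta> * u2 $ i" if "x \<in> {($) a, ($) b, ($) c, ($) d}" for x
    using that by fastforce
  then obtain y1 y2 where "\<forall>q\<in>?S \<times> ?S. v q + v (prod.swap q) = 2 * (tensor y1 y1 q + tensor y2 y2 q)"
    using symmetric_part_in_two_dim_span[of "($) a" "($) b" "($) c" "($) d" ?S "($) u1" "($) u2"]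
    unfolding v_def by blast
  then have "0 \<le> sesq (?S \<times> ?S) (pt_kernel ?G) v v"
    using states realigned by (intro sesq_pt_nonneg_of_symmetric_part shuffle_kernel_hermitian
        shuffle_kernel_psd shuffle_kernel_realignment_invariant) auto
  also have "sesq (?S \<times> ?S) (pt_kernel ?G) v v
      = trace (shuffle k n (\<lambda>i. ptrans k (\<gamma> i)) * outer (kron_vec (k ^ n) a b + kron_vec (k ^ n) c d))"
    unfolding trace_shuffle_ptrans_outer[OF add_carrier_vec[OF kron_vec_carrier kron_vec_carrier]] v_def
    by (auto intro!: sesq_cong simp: kron_vec_add_entry)
  finally show ?thesis .
qed

theorem mainTheorem19:
  fixes k n :: nat and \<gamma> :: "nat \<Rightarrow> complex mat"
  assumes "n \<ge> 1"
    and "\<forall>i<n. is_state (k*k) (\<gamma> i) \<and> realign k (\<gamma> i) = \<gamma> i"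
  shows "\<not> (\<exists>a b c d. a \<in> carrier_vec (k^n) \<and> b \<in> carrier_vec (k^n) \<and>
                  c \<in> carrier_vec (k^n) \<and> d \<in> carrier_vec (k^n) \<and>
                  vec_space.rank (k^n) (mat_of_cols (k^n) [a, b, c, d]) = 2 \<and>
                  trace (shuffle k n (\<lambda>i. ptrans k (\<gamma> i)) *
                    outer (kron_vec (k^n) a b + kron_vec (k^n) c d)) < 0)"
  using trace_shuffle_ptrans_outer_nonneg[of n k \<gamma>] assms(2)
  by (fastforce simp: less_eq_complex_def less_complex_def)

end
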